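(* Let $G:\mathbb{R}^{d_x}\to\mathbb{R}$ be $\mu_x$-strongly convex and $L_x$-smooth, $F:\mathbb{R}^{d_y}\to\mathbb{R}\cup\{+\infty\}$ proper closed convex with conjugate $F^\star$, $K:\mathbb{R}^{d_x}\to\mathbb{R}^{d_y}$ linear, and $(x^\star,y^\star)$ a solution of $\min_x\max_y\{G(x)+\langle y,Kx\rangle-F^\star(y)\}$. Choose any $\eta_x,\eta_y>0$ (and any $\beta_y>0$, $\theta\in[0,1]$). Then the iterates of APDA satisfy, for all $k\ge0$, $(1+\mu_x\eta_x)\frac{1}{\eta_x}\|x^{k+1}-x^\star\|^2\le\frac{1}{\eta_x}\|x^k-x^\star\|^2-\frac{1}{\eta_x}\|x^{k+1}-x^k\|^2-2\langle K^\top\bar y^k-K^\top y^\star,x^{k+1}-x^\star\rangle-\frac{1}{L_x}\|\nabla G(x^{k+1})-\nabla G(x^\star)\|^2.$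
   Context: $\mu_x$-strong convexity: $G(x')-G(x'')-\langle\nabla G(x''),x'-x''\rangle\ge\frac{\mu_x}{2}\|x'-x''\|^2$; $L_x$-smoothness: $\|\nabla G(x')-\nabla G(x'')\|\le L_x\|x'-x''\|$. A solution satisfies $\nabla G(x^\star)+K^\top y^\star=0$ and $0\in\partial F^\star(y^\star)-Kx^\star$. APDA: given $(x^0,y^0)$, $\bar y^0=y^0$, stepsizes $\eta_x,\eta_y,\beta_y>0$, $\theta\in[0,1]$, for $k=0,1,\dots$: $x^{k+1}$ satisfies $x^{k+1}=x^k-\eta_x(\nabla G(x^{k+1})+K^\top\bar y^k)$; $y^{k+1}=y^k-\eta_y(g^{k+1}-Kx^{k+1})-\eta_y\beta_yK(K^\top y^k+\nabla G(x^{k+1}))$ with $g^{k+1}\in\partial F^\star(y^{k+1})$ (a proximal step on $F^\star$); $\bar y^{k+1}=y^{k+1}+\theta(y^{k+1}-y^k)$. *)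

theory Defs
  imports "HOL-Analysis.Analysis"
begin

definition proper_fun :: "('a \<Rightarrow> ereal) \<Rightarrow> bool" where
  "proper_fun F \<longleftrightarrow> (\<forall>x. F x \<noteq> -\<infinity>) \<and> (\<exists>x. F x \<noteq> \<infinity>)"

definition epigraph :: "('a \<Rightarrow> ereal) \<Rightarrow> ('a \<times> real) set" where
  "epigraph F = {(x, t). F x \<le> ereal t}"

definition closed_fun :: "('a::topological_space \<Rightarrow> ereal) \<Rightarrow> bool" where
  "closed_fun F \<longleftrightarrow> closed (epigraph F)"

definition convex_fun :: "('a::real_vector \<Rightarrow> ereal) \<Rightarrow> bool" where
  "convex_fun F \<longleftrightarrow> convex (epigraph F)"

definition conjugate :: "('a::real_inner \<Rightarrow> ereal) \<Rightarrow> 'a \<Rightarrow> ereal" where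
  "conjugate F y = (SUP x. ereal (inner y x) - F x)"

definition subdiff :: "('a::real_inner \<Rightarrow> ereal) \<Rightarrow> 'a \<Rightarrow> 'a set" where
  "subdiff f y = {g. \<bar>f y\<bar> \<noteq> \<infinity> \<and> (\<forall>z. f y + ereal (inner g (z - y)) \<le> f z)}"

end

theory Submission
  imports Defs
begin

text \<open>The x-update is an implicit gradient step: \<open>x\<^sub>k - x\<^sub>k\<^sub>+\<^sub>1\<close> equals \<open>\<eta>\<^sub>x\<close> times
  \<open>(\<nabla>G(x\<^sub>k\<^sub>+\<^sub>1) - \<nabla>G(x\<^sup>\<star>)) + (K\<^sup>T ybar\<^sub>k - K\<^sup>T y\<^sup>\<star>)\<close>, because \<open>\<nabla>G(x\<^sup>\<star>) = -K\<^sup>T y\<^sup>\<star>\<close>.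
  Expanding \<open>\<parallel>x\<^sub>k - x\<^sup>\<star>\<parallel>\<^sup>2\<close> around \<open>x\<^sub>k\<^sub>+\<^sub>1\<close> therefore produces the coupling term and
  twice \<open>\<langle>\<nabla>G(x\<^sub>k\<^sub>+\<^sub>1) - \<nabla>G(x\<^sup>\<star>), x\<^sub>k\<^sub>+\<^sub>1 - x\<^sup>\<star>\<rangle>\<close>. One copy is bounded below by strong
  monotonicity of \<open>\<nabla>G\<close>, the other by its co-coercivity (Baillon-Haddad), which follows from
  the descent lemma applied at the point \<open>v - (\<nabla>G(v) - \<nabla>G(u))/L\<close>.\<close>

lemma lipschitz_gradient_quadratic_upper_bound:
  fixes G :: "'a::real_inner \<Rightarrow> real" and gradG :: "'a \<Rightarrow> 'a"
  assumes grad: "\<And>z. (G has_derivative (\<lambda>h. inner (gradG z) h)) (at z)"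
    and lipschitz: "\<And>x' x''. norm (gradG x' - gradG x'') \<le> L * norm (x' - x'')"
  shows "G y \<le> G x + inner (gradG x) (y - x) + L / 2 * (norm (y - x))\<^sup>2"
proof -
  define v where "v = y - x"
  define \<phi> where "\<phi> t = G (x + t *\<^sub>R v) - t * inner (gradG x) v - L / 2 * t\<^sup>2 * (norm v)\<^sup>2" for t
  have \<phi>_deriv: "(\<phi> has_real_derivative
      (inner (gradG (x + t *\<^sub>R v)) v - inner (gradG x) v - L * t * (norm v)\<^sup>2)) (at t)" for t
  proof -
    have line: "((\<lambda>t. x + t *\<^sub>R v) has_derivative (\<lambda>h. h *\<^sub>R v)) (at t)"
      by (auto intro!: derivative_eq_intros)
    have "((\<lambda>t. G (x + t *\<^sub>R v)) has_derivative (\<lambda>h. inner (gradG (x + t *\<^sub>R v)) (h *\<^sub>R v))) (at t)"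
      by (rule has_derivative_compose[OF line grad])
    then have G_line: "((\<lambda>t. G (x + t *\<^sub>R v)) has_real_derivative inner (gradG (x + t *\<^sub>R v)) v) (at t)"
      unfolding has_field_derivative_def by (simp add: mult.commute[of _ "inner _ _"])
    show ?thesis
      unfolding \<phi>_def by (rule G_line derivative_eq_intros refl | simp)+
  qed
  have "\<phi> 1 \<le> \<phi> 0"
  proof (rule DERIV_nonpos_imp_nonincreasing[of 0 1])
    fix t :: real
    assume t: "0 \<le> t" "t \<le> 1"
    have "inner (gradG (x + t *\<^sub>R v)) v - inner (gradG x) v = inner (gradG (x + t *\<^sub>R v) - gradG x) v"
      by (simp add: inner_diff_left)
    also have "\<dots> \<le> norm (gradG (x + t *\<^sub>R v) - gradG x) * norm v"
      by (rule norm_cauchy_schwarz)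
    also have "\<dots> \<le> L * norm (t *\<^sub>R v) * norm v"
      using lipschitz[of "x + t *\<^sub>R v" x] by (intro mult_right_mono) auto
    also have "\<dots> = L * t * (norm v)\<^sup>2"
      using t by (simp add: power2_eq_square)
    finally show "\<exists>d. DERIV \<phi> t :> d \<and> d \<le> 0"
      using \<phi>_deriv by fastforce
  qed simp
  then show ?thesis
    unfolding \<phi>_def v_def by simp
qed

lemma convex_lipschitz_gradient_lower_bound:
  fixes G :: "'a::real_inner \<Rightarrow> real" and gradG :: "'a \<Rightarrow> 'a"
  assumes grad: "\<And>z. (G has_derivative (\<lambda>h. inner (gradG z) h)) (at z)"
    and lipschitz: "\<And>x' x''. norm (gradG x' - gradG x'') \<le> L * norm (x' - x'')"
    and convex: "\<And>x' x''. G x' - G x'' - inner (gradG x'') (x' - x'') \<ge> 0"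
    and L: "L > 0"
  shows "G y \<ge> G x + inner (gradG x) (y - x) + 1 / (2 * L) * (norm (gradG y - gradG x))\<^sup>2"
proof -
  define g where "g = gradG y - gradG x"
  define z where "z = y - (1 / L) *\<^sub>R g"
  have lower: "G z \<ge> G x + inner (gradG x) (z - x)"
    using convex[of z x] by simp
  have upper: "G z \<le> G y + inner (gradG y) (z - y) + L / 2 * (norm (z - y))\<^sup>2"
    by (rule lipschitz_gradient_quadratic_upper_bound[OF grad lipschitz])
  have "inner (gradG x) (z - x) = inner (gradG x) (y - x) - (1 / L) * inner (gradG x) g"
    unfolding z_def by (simp add: inner_diff_right algebra_simps)
  moreover have "inner (gradG y) (z - y) = - (1 / L) * inner (gradG y) g"
    unfolding z_def by (simp add: inner_diff_right algebra_simps)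
  moreover have "L / 2 * (norm (z - y))\<^sup>2 = 1 / (2 * L) * (norm g)\<^sup>2"
    unfolding z_def using L by (simp add: power2_eq_square field_simps)
  moreover have "(1 / L) * inner (gradG y) g - (1 / L) * inner (gradG x) g = (1 / L) * (norm g)\<^sup>2"
    unfolding g_def by (simp add: inner_diff_left power2_norm_eq_inner diff_divide_distrib)
  ultimately show ?thesis
    using lower upper unfolding g_def[symmetric] by (simp add: field_simps)
qed

lemma strongly_convex_gradient_strongly_monotone:
  fixes G :: "'a::real_inner \<Rightarrow> real" and gradG :: "'a \<Rightarrow> 'a"
  assumes strongly_convex: "\<And>x' x''. G x' - G x'' - inner (gradG x'') (x' - x'') \<ge> \<mu> / 2 * (norm (x' - x''))\<^sup>2"
  shows "inner (gradG a - gradG b) (a - b) \<ge> \<mu> * (norm (a - b))\<^sup>2"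
proof -
  have "inner (gradG a) (b - a) = - inner (gradG a) (a - b)"
    by (metis inner_minus_right minus_diff_eq)
  moreover have "norm (b - a) = norm (a - b)"
    by (rule norm_minus_commute)
  ultimately show ?thesis
    using strongly_convex[of a b] strongly_convex[of b a]
    by (simp add: inner_diff_left)
qed

lemma convex_lipschitz_gradient_cocoercive:
  fixes G :: "'a::real_inner \<Rightarrow> real" and gradG :: "'a \<Rightarrow> 'a"
  assumes grad: "\<And>z. (G has_derivative (\<lambda>h. inner (gradG z) h)) (at z)"
    and lipschitz: "\<And>x' x''. norm (gradG x' - gradG x'') \<le> L * norm (x' - x'')"
    and convex: "\<And>x' x''. G x' - G x'' - inner (gradG x'') (x' - x'') \<ge> 0"
    and L: "L > 0"
  shows "inner (gradG a - gradG b) (a - b) \<ge> 1 / L * (norm (gradG a - gradG b))\<^sup>2"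
proof -
  note lower = convex_lipschitz_gradient_lower_bound[OF grad lipschitz convex L]
  have "inner (gradG a) (b - a) = - inner (gradG a) (a - b)"
    by (metis inner_minus_right minus_diff_eq)
  moreover have "norm (gradG b - gradG a) = norm (gradG a - gradG b)"
    by (rule norm_minus_commute)
  ultimately show ?thesis
    using lower[of a b] lower[of b a]
    by (simp add: inner_diff_left)
qed

lemma implicit_gradient_step_distance_bound:
  fixes G :: "'a::real_inner \<Rightarrow> real" and gradG :: "'a \<Rightarrow> 'a"
  assumes grad: "\<And>z. (G has_derivative (\<lambda>h. inner (gradG z) h)) (at z)"
    and strongly_convex: "\<And>x' x''. G x' - G x'' - inner (gradG x'') (x' - x'') \<ge> \<mu> / 2 * (norm (x' - x''))\<^sup>2"
    and lipschitz: "\<And>x' x''. norm (gradG x' - gradG x'') \<le> L * norm (x' - x'')"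
    and \<mu>: "\<mu> \<ge> 0" and L: "L > 0" and \<eta>: "\<eta> > 0"
    and step: "x' = x - \<eta> *\<^sub>R (gradG x' + w)"
    and optimal: "gradG xs + ws = 0"
  shows "(1 + \<mu> * \<eta>) * (1 / \<eta>) * (norm (x' - xs))\<^sup>2
     \<le> (1 / \<eta>) * (norm (x - xs))\<^sup>2 - (1 / \<eta>) * (norm (x' - x))\<^sup>2
        - 2 * inner (w - ws) (x' - xs) - (1 / L) * (norm (gradG x' - gradG xs))\<^sup>2"
proof -
  define d where "d = x' - xs"
  define Q where "Q = inner (gradG x' - gradG xs) d"
  have convex: "G x1 - G x2 - inner (gradG x2) (x1 - x2) \<ge> 0" for x1 x2
    using \<mu> by (intro order_trans[OF _ strongly_convex]) simp
  have monotone: "Q \<ge> \<mu> * (norm d)\<^sup>2"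
    unfolding Q_def d_def by (rule strongly_convex_gradient_strongly_monotone[OF strongly_convex])
  have cocoercive: "Q \<ge> 1 / L * (norm (gradG x' - gradG xs))\<^sup>2"
    unfolding Q_def d_def by (rule convex_lipschitz_gradient_cocoercive[OF grad lipschitz convex L])
  have "ws = - gradG xs" using optimal by (simp add: add_eq_0_iff)
  then have "x - x' = \<eta> *\<^sub>R ((gradG x' - gradG xs) + (w - ws))"
    using step by (simp add: algebra_simps)
  then have cross: "inner (x - x') d = \<eta> * (Q + inner (w - ws) d)"
    unfolding Q_def by (simp add: inner_add_left)
  have "(norm (x - xs))\<^sup>2 = (norm ((x - x') + d))\<^sup>2"
    unfolding d_def by simp
  also have "\<dots> = (norm (x' - x))\<^sup>2 + 2 * inner (x - x') d + (norm d)\<^sup>2"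
    by (simp add: power2_norm_eq_inner inner_add_left inner_add_right inner_commute
        norm_minus_commute[of x' x])
  finally have "(norm (x - xs))\<^sup>2 = (norm (x' - x))\<^sup>2 + 2 * \<eta> * (Q + inner (w - ws) d) + (norm d)\<^sup>2"
    unfolding cross by simp
  then have "(1 / \<eta>) * (norm (x - xs))\<^sup>2 - (1 / \<eta>) * (norm (x' - x))\<^sup>2 - 2 * inner (w - ws) d
      = (1 / \<eta>) * (norm d)\<^sup>2 + 2 * Q"
    using \<eta> by (simp add: field_simps)
  moreover have "(1 + \<mu> * \<eta>) * (1 / \<eta>) * (norm d)\<^sup>2 = (1 / \<eta>) * (norm d)\<^sup>2 + \<mu> * (norm d)\<^sup>2"
    using \<eta> by (simp add: field_simps)
  ultimately show ?thesis
    using monotone cocoercive unfolding d_def by linarith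
qed

theorem lemma6:
  fixes G :: "real^'n \<Rightarrow> real" and gradG :: "real^'n \<Rightarrow> real^'n"
    and F :: "real^'m \<Rightarrow> ereal" and K :: "real^'n^'m"
    and \<mu>x Lx \<eta>x \<eta>y \<beta>y \<theta> :: real
    and xs :: "real^'n" and ys :: "real^'m"
    and x :: "nat \<Rightarrow> real^'n" and y ybar :: "nat \<Rightarrow> real^'m"
  assumes grad: "\<And>z. (G has_derivative (\<lambda>h. inner (gradG z) h)) (at z)"
    and mu_pos: "\<mu>x > 0"
    and strongly_convex: "\<And>x' x''. G x' - G x'' - inner (gradG x'') (x' - x'') \<ge> \<mu>x / 2 * (norm (x' - x''))\<^sup>2"
    and L_pos: "Lx > 0"
    and smooth: "\<And>x' x''. norm (gradG x' - gradG x'') \<le> Lx * norm (x' - x'')"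
    and F_proper: "proper_fun F" and F_closed: "closed_fun F" and F_convex: "convex_fun F"
    and sol1: "gradG xs + transpose K *v ys = 0"
    and sol2: "K *v xs \<in> subdiff (conjugate F) ys"
    and eta_x: "\<eta>x > 0" and eta_y: "\<eta>y > 0" and beta_y: "\<beta>y > 0"
    and theta: "0 \<le> \<theta>" "\<theta> \<le> 1"
    and ybar0: "ybar 0 = y 0"
    and x_step: "\<And>k. x (Suc k) = x k - \<eta>x *\<^sub>R (gradG (x (Suc k)) + transpose K *v ybar k)"
    and y_step: "\<And>k. \<exists>g. g \<in> subdiff (conjugate F) (y (Suc k)) \<and>
        y (Suc k) = y k - \<eta>y *\<^sub>R (g - K *v x (Suc k))
                    - (\<eta>y * \<beta>y) *\<^sub>R (K *v (transpose K *v y k + gradG (x (Suc k))))"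
    and ybar_step: "\<And>k. ybar (Suc k) = y (Suc k) + \<theta> *\<^sub>R (y (Suc k) - y k)"
  shows "\<forall>k. (1 + \<mu>x * \<eta>x) * (1 / \<eta>x) * (norm (x (Suc k) - xs))\<^sup>2
     \<le> (1 / \<eta>x) * (norm (x k - xs))\<^sup>2 - (1 / \<eta>x) * (norm (x (Suc k) - x k))\<^sup>2
        - 2 * inner (transpose K *v ybar k - transpose K *v ys) (x (Suc k) - xs)
        - (1 / Lx) * (norm (gradG (x (Suc k)) - gradG xs))\<^sup>2"
proof
  fix k
  show "(1 + \<mu>x * \<eta>x) * (1 / \<eta>x) * (norm (x (Suc k) - xs))\<^sup>2
     \<le> (1 / \<eta>x) * (norm (x k - xs))\<^sup>2 - (1 / \<eta>x) * (norm (x (Suc k) - x k))\<^sup>2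
        - 2 * inner (transpose K *v ybar k - transpose K *v ys) (x (Suc k) - xs)
        - (1 / Lx) * (norm (gradG (x (Suc k)) - gradG xs))\<^sup>2"
    using mu_pos L_pos eta_x x_step[of k] sol1
    by (intro implicit_gradient_step_distance_bound[OF grad strongly_convex smooth]) auto
qed

end
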